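(* For $0<A<1$ and $m>0$ let $K_m(A)=-e^{i\pi A}+e^{-i\pi A}e^{4\pi m i/3}-e^{i\pi A}e^{4\pi m i/3}$. Let $A_0,B_0\in(0,1)$ with $A_0+B_0=1$. Then there exist $\delta>0$ and differentiable real functions $\Theta_1(A,B),\Theta_2(A,B)$ defined on $\{|A-A_0|+|B-B_0|<\delta\}$ with $\Theta_1(A_0,B_0)=1$, $\Theta_2(A_0,B_0)=2$ and $$K_{\Theta_2(A,B)}(A)+K_{\Theta_1(A,B)}(B)=0$$ (so that $(A,B,\Theta_1(A,B),\Theta_2(A,B))$ belongs to the set $\mathcal K$ below). Moreover $$\lim_{\varepsilon\to0}\frac{\Theta_1(A_0,B_0-\varepsilon)-1}{\varepsilon}=\lim_{\varepsilon\to0}\frac{\Theta_2(A_0,B_0-\varepsilon)-2}{\varepsilon}=-\frac38\Big(1+\sqrt3\cot(\pi A_0)\Big).$$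
   Context: $\mathcal K=\{(A,B,n,m):0<A,B<1,\ n>0,\ m>0,\ \tfrac{2(n+m)}{3}>1,\ K_m(A)+K_n(B)=0\}$. *)

theory Defs
  imports "HOL-Analysis.Analysis"
begin

definition Kfun :: "real \<Rightarrow> real \<Rightarrow> complex" where
  "Kfun m A = - exp (\<i> * of_real (pi * A))
              + exp (- \<i> * of_real (pi * A)) * exp (of_real (4 * pi * m / 3) * \<i>)
              - exp (\<i> * of_real (pi * A)) * exp (of_real (4 * pi * m / 3) * \<i>)"

definition Kset :: "(real \<times> real \<times> real \<times> real) set" where
  "Kset = {(A, B, n, m). 0 < A \<and> A < 1 \<and> 0 < B \<and> B < 1 \<and> n > 0 \<and> m > 0
            \<and> 2 * (n + m) / 3 > 1 \<and> Kfun m A + Kfun n B = 0}"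

end

theory Submission
  imports Defs
begin

(*
  Since cis(-x) - cis x = -2i sin x, one has K_m(A) = -cis(pi A) - 2i sin(pi A) cis(4 pi m/3), and
  cis(pi A) + cis(pi B) = 2 cos(pi(A-B)/2) cis(pi(A+B)/2).  After rotating by cis(pi(A+B)/2) the
  equation K_{Theta2}(A) + K_{Theta1}(B) = 0 therefore says that the segments of lengths sin(pi A)
  and sin(pi B), turned by the unknown angles, close up a triangle with base cos(pi(A-B)/2).  For
  (A, B) near (A0, 1 - A0) that triangle is nondegenerate, and its angles, given by the law of
  cosines, yield explicit smooth solutions Theta1, Theta2.  On A + B = 1 the three sides are all
  sin(pi A), so the triangle is equilateral and Theta1 = 1, Theta2 = 2; the two limits are minus
  the B-derivatives of these explicit formulas.
*)

lemma Kfun_eq_cis: "Kfun m A = - cis (pi * A) - 2 * \<i> * sin (pi * A) * cis (4 * pi * m / 3)"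
proof -
  have "Kfun m A = - cis (pi * A) + (cis (- (pi * A)) - cis (pi * A)) * cis (4 * pi * m / 3)"
    unfolding Kfun_def cis_conv_exp by (simp add: algebra_simps)
  also have "cis (- (pi * A)) - cis (pi * A) = - 2 * \<i> * sin (pi * A)"
    by (simp add: complex_eq_iff)
  finally show ?thesis by (simp add: algebra_simps)
qed

lemma cis_add_cis: "cis a + cis b = 2 * complex_of_real (cos ((a - b) / 2)) * cis ((a + b) / 2)"
proof -
  have "cis a = cis ((a + b) / 2) * cis ((a - b) / 2)" "cis b = cis ((a + b) / 2) * cis (- ((a - b) / 2))"
    by (simp_all add: cis_mult field_simps)
  moreover have "cis ((a - b) / 2) + cis (- ((a - b) / 2)) = 2 * complex_of_real (cos ((a - b) / 2))"
    by (simp add: complex_eq_iff)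
  ultimately show ?thesis by (simp add: algebra_simps) (metis distrib_left mult.commute mult_2)
qed

lemma triangle_closes:
  fixes r s t :: real
  defines "x \<equiv> (r\<^sup>2 + s\<^sup>2 - t\<^sup>2) / (2 * r * s)" and "y \<equiv> (r\<^sup>2 + t\<^sup>2 - s\<^sup>2) / (2 * r * t)"
  assumes "r > 0" "s > 0" "t > 0" "\<bar>x\<bar> \<le> 1" "\<bar>y\<bar> \<le> 1"
  shows "s * cis (- arccos x) + t * cis (arccos y) = r"
proof -
  have x: "-1 \<le> x" "x \<le> 1" and y: "-1 \<le> y" "y \<le> 1"
    using assms(6,7) by auto
  have re: "s * x + t * y = r"
    using assms(3-5) unfolding x_def y_def by (simp add: field_simps power2_eq_square)
  have "s\<^sup>2 * (1 - x\<^sup>2) = t\<^sup>2 * (1 - y\<^sup>2)"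
    using assms(3-5) unfolding x_def y_def by (simp add: field_simps power2_eq_square)
  then have "s * sqrt (1 - x\<^sup>2) = t * sqrt (1 - y\<^sup>2)"
    using assms(4,5) by (metis abs_of_pos real_sqrt_abs real_sqrt_mult)
  then show ?thesis
    using re x y by (simp add: complex_eq_iff sin_arccos)
qed

lemma cos_half_diff_pos:
  assumes "0 < A" "A < 1" "0 < B" "B < 1"
  shows "cos (pi * (A - B) / 2) > 0"
proof (rule cos_gt_zero_pi)
  have "pi * -1 < pi * (A - B)" "pi * (A - B) < pi * 1"
    using assms by (intro mult_strict_left_mono; simp)+
  then show "- (pi / 2) < pi * (A - B) / 2" "pi * (A - B) / 2 < pi / 2" by auto
qed

text \<open>By the law of cosines, \<open>angle_cos A B\<close> is the cosine of the angle between the sides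
  \<open>cos (\<pi>(A - B)/2)\<close> and \<open>sin (\<pi>A)\<close> of a triangle whose third side is \<open>sin (\<pi>B)\<close>.\<close>

definition angle_cos :: "real \<Rightarrow> real \<Rightarrow> real" where
  "angle_cos A B = ((cos (pi * (A - B) / 2))\<^sup>2 + (sin (pi * A))\<^sup>2 - (sin (pi * B))\<^sup>2)
                   / (2 * cos (pi * (A - B) / 2) * sin (pi * A))"

text \<open>The offsets \<open>\<pi>/2\<close> and \<open>5\<pi>/2\<close> select the branch with \<open>Theta1 = 1\<close> and \<open>Theta2 = 2\<close> on \<open>A + B = 1\<close>.\<close>

definition Theta1 :: "real \<times> real \<Rightarrow> real" where
  "Theta1 = (\<lambda>(A, B). 3 / (4 * pi) * (pi / 2 + pi * (A + B) / 2 + arccos (angle_cos B A)))"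

definition Theta2 :: "real \<times> real \<Rightarrow> real" where
  "Theta2 = (\<lambda>(A, B). 3 / (4 * pi) * (5 * pi / 2 + pi * (A + B) / 2 - arccos (angle_cos A B)))"

lemma Kfun_Theta_eq_0:
  assumes "0 < A" "A < 1" "0 < B" "B < 1" "\<bar>angle_cos A B\<bar> \<le> 1" "\<bar>angle_cos B A\<bar> \<le> 1"
  shows "Kfun (Theta2 (A, B)) A + Kfun (Theta1 (A, B)) B = 0"
proof -
  define r where "r = cos (pi * (A - B) / 2)"
  define s where "s = sin (pi * A)"
  define t where "t = sin (pi * B)"
  define \<sigma> where "\<sigma> = pi * (A + B) / 2"
  define \<alpha> where "\<alpha> = arccos (angle_cos A B)"
  define \<beta> where "\<beta> = arccos (angle_cos B A)"
  have "r > 0" unfolding r_def using assms(1-4) by (rule cos_half_diff_pos)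
  moreover have "s > 0" "t > 0" unfolding s_def t_def using assms by (auto intro!: sin_gt_zero)
  moreover have "cos (pi * (B - A) / 2) = r"
    unfolding r_def by (metis cos_minus minus_diff_eq minus_divide_left mult_minus_right)
  ultimately have closes: "s * cis (- \<alpha>) + t * cis \<beta> = r"
    using triangle_closes[of r s t] assms(5,6)
    unfolding \<alpha>_def \<beta>_def angle_cos_def r_def s_def t_def by (simp add: mult.commute)
  have "4 * pi * Theta2 (A, B) / 3 = 2 * pi + pi / 2 + \<sigma> + - \<alpha>"
    unfolding Theta2_def \<sigma>_def \<alpha>_def by (simp add: field_simps)
  then have "cis (4 * pi * Theta2 (A, B) / 3) = cis (2 * pi) * cis (pi / 2) * cis \<sigma> * cis (- \<alpha>)"
    by (simp only: cis_mult)
  then have cis2: "cis (4 * pi * Theta2 (A, B) / 3) = \<i> * cis \<sigma> * cis (- \<alpha>)"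
    by simp
  have "4 * pi * Theta1 (A, B) / 3 = pi / 2 + \<sigma> + \<beta>"
    unfolding Theta1_def \<sigma>_def \<beta>_def by (simp add: field_simps)
  then have "cis (4 * pi * Theta1 (A, B) / 3) = cis (pi / 2) * cis \<sigma> * cis \<beta>"
    by (simp only: cis_mult)
  then have cis1: "cis (4 * pi * Theta1 (A, B) / 3) = \<i> * cis \<sigma> * cis \<beta>"
    by simp
  have "Kfun (Theta2 (A, B)) A + Kfun (Theta1 (A, B)) B
      = - (cis (pi * A) + cis (pi * B)) + 2 * cis \<sigma> * (s * cis (- \<alpha>) + t * cis \<beta>)"
    unfolding Kfun_eq_cis cis1 cis2 s_def t_def by (simp add: algebra_simps)
  also have "\<dots> = 0"
    unfolding closes cis_add_cis r_def \<sigma>_def by (simp add: algebra_simps)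
  finally show ?thesis .
qed

lemma Theta_mem_Kset:
  assumes "0 < A" "A < 1" "0 < B" "B < 1" "\<bar>angle_cos A B\<bar> \<le> 1" "\<bar>angle_cos B A\<bar> \<le> 1"
  shows "(A, B, Theta1 (A, B), Theta2 (A, B)) \<in> Kset"
proof -
  have \<alpha>: "0 \<le> arccos (angle_cos A B)" "arccos (angle_cos A B) \<le> pi"
    and \<beta>: "0 \<le> arccos (angle_cos B A)" "arccos (angle_cos B A) \<le> pi"
    using assms(5,6) by (auto intro!: arccos_lbound arccos_ubound)
  have \<sigma>: "pi * (A + B) / 2 > 0" using assms(1,3) by simp
  have "Theta1 (A, B) > 0"
    unfolding Theta1_def prod.case by (intro mult_pos_pos; use \<beta> \<sigma> in simp)
  moreover have "Theta2 (A, B) > 0"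
    unfolding Theta2_def prod.case by (intro mult_pos_pos; use \<alpha> \<sigma> in simp)
  moreover have "2 * (Theta1 (A, B) + Theta2 (A, B)) / 3 > 1"
  proof -
    have "2 * (Theta1 (A, B) + Theta2 (A, B)) / 3
        = (3 * pi + pi * (A + B) + arccos (angle_cos B A) - arccos (angle_cos A B)) / (2 * pi)"
      unfolding Theta1_def Theta2_def by (simp add: field_simps)
    moreover have "2 * pi < 3 * pi + pi * (A + B) + arccos (angle_cos B A) - arccos (angle_cos A B)"
      using \<alpha> \<beta> \<sigma> by linarith
    ultimately show ?thesis by (simp add: less_divide_eq)
  qed
  ultimately show ?thesis
    using assms(1-4) Kfun_Theta_eq_0[OF assms] unfolding Kset_def by simp
qed

lemma Theta_differentiable:
  assumes "0 < A" "A < 1" "0 < B" "B < 1" "\<bar>angle_cos A B\<bar> < 1" "\<bar>angle_cos B A\<bar> < 1"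
  shows "Theta1 differentiable (at (A, B))" "Theta2 differentiable (at (A, B))"
proof -
  have cos: "cos (pi * (A - B) / 2) \<noteq> 0" "cos (pi * (B - A) / 2) \<noteq> 0"
    using assms(1-4) cos_half_diff_pos[of A B] cos_half_diff_pos[of B A] by auto
  have sin: "sin (pi * A) \<noteq> 0" "sin (pi * B) \<noteq> 0"
    using assms(1-4) sin_gt_zero[of "pi * A"] sin_gt_zero[of "pi * B"] by auto
  have bounds: "-1 < angle_cos A B" "angle_cos A B < 1" "-1 < angle_cos B A" "angle_cos B A < 1"
    using assms(5,6) by auto
  show "Theta1 differentiable (at (A, B))"
    unfolding Theta1_def split_beta' differentiable_def
    by (rule exI, (rule derivative_eq_intros refl | use bounds cos sin in \<open>simp add: angle_cos_def\<close>)+)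
  show "Theta2 differentiable (at (A, B))"
    unfolding Theta2_def split_beta' differentiable_def
    by (rule exI, (rule derivative_eq_intros refl | use bounds cos sin in \<open>simp add: angle_cos_def\<close>)+)
qed

definition admissible :: "real \<Rightarrow> real \<Rightarrow> bool" where
  "admissible A B \<longleftrightarrow> 0 < A \<and> A < 1 \<and> 0 < B \<and> B < 1 \<and> \<bar>angle_cos A B\<bar> < 1 \<and> \<bar>angle_cos B A\<bar> < 1"

lemma eventually_admissible:
  assumes "admissible A B"
  shows "eventually (\<lambda>z. admissible (fst z) (snd z)) (nhds (A, B))"
proof -
  have lim: "(g \<longlongrightarrow> g (A, B)) (nhds (A, B))" if "isCont g (A, B)" for g :: "real \<times> real \<Rightarrow> real"
    using that by (simp add: isCont_def tendsto_at_iff_tendsto_nhds)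
  have "cos (pi * (A - B) / 2) \<noteq> 0" "cos (pi * (B - A) / 2) \<noteq> 0"
    using assms cos_half_diff_pos[of A B] cos_half_diff_pos[of B A] by (auto simp: admissible_def)
  moreover have "sin (pi * A) \<noteq> 0" "sin (pi * B) \<noteq> 0"
    using assms sin_gt_zero[of "pi * A"] sin_gt_zero[of "pi * B"] by (auto simp: admissible_def)
  ultimately have "isCont (\<lambda>z. \<bar>angle_cos (fst z) (snd z)\<bar>) (A, B)"
    "isCont (\<lambda>z. \<bar>angle_cos (snd z) (fst z)\<bar>) (A, B)"
    unfolding angle_cos_def by (auto intro!: continuous_intros)
  from this[THEN lim] have "\<forall>\<^sub>F z in nhds (A, B). \<bar>angle_cos (fst z) (snd z)\<bar> < 1"
    "\<forall>\<^sub>F z in nhds (A, B). \<bar>angle_cos (snd z) (fst z)\<bar> < 1"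
    using assms by (auto simp: admissible_def intro: order_tendstoD)
  moreover have "\<forall>\<^sub>F z in nhds (A, B). 0 < fst z \<and> fst z < 1 \<and> 0 < snd z \<and> snd z < 1"
    using lim[of fst] lim[of snd] assms
    by (auto simp: admissible_def intro!: eventually_conj order_tendstoD)
  ultimately show ?thesis
    by eventually_elim (simp add: admissible_def)
qed

lemma eventually_nhds_Pair_sum_abs:
  fixes a b :: real
  assumes "\<forall>\<^sub>F z in nhds (a, b). P (fst z) (snd z)"
  obtains d where "d > 0" "\<And>x y. \<bar>x - a\<bar> + \<bar>y - b\<bar> < d \<Longrightarrow> P x y"
proof -
  obtain d where "d > 0" and P: "\<And>z. dist z (a, b) < d \<Longrightarrow> P (fst z) (snd z)"
    using assms unfolding eventually_nhds_metric by blast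
  moreover have "dist (x, y) (a, b) \<le> \<bar>x - a\<bar> + \<bar>y - b\<bar>" for x y
    using sqrt_sum_squares_le_sum_abs[of "x - a" "y - b"] by (simp add: dist_Pair_Pair dist_real_def)
  ultimately show ?thesis
    using that by (metis fst_conv snd_conv le_less_trans)
qed

lemma complementary_trig:
  assumes "A + B = 1"
  shows "sin (pi * B) = sin (pi * A)" "cos (pi * B) = - cos (pi * A)"
    "cos (pi * (A - B) / 2) = sin (pi * A)" "sin (pi * (A - B) / 2) = - cos (pi * A)"
    "cos (pi * (B - A) / 2) = sin (pi * A)" "sin (pi * (B - A) / 2) = cos (pi * A)"
proof -
  have B: "B = 1 - A" using assms by simp
  have "pi * B = pi - pi * A" unfolding B by (simp add: algebra_simps)
  then show "sin (pi * B) = sin (pi * A)" "cos (pi * B) = - cos (pi * A)"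
    by simp_all
  have AB: "pi * (A - B) / 2 = pi * A - pi / 2" unfolding B by (simp add: field_simps)
  show "cos (pi * (A - B) / 2) = sin (pi * A)" "sin (pi * (A - B) / 2) = - cos (pi * A)"
    unfolding AB by (simp_all add: cos_diff sin_diff)
  have BA: "pi * (B - A) / 2 = pi / 2 - pi * A" unfolding B by (simp add: field_simps)
  show "cos (pi * (B - A) / 2) = sin (pi * A)" "sin (pi * (B - A) / 2) = cos (pi * A)"
    unfolding BA by (simp_all add: cos_diff sin_diff)
qed

lemma angle_cos_complementary:
  assumes "0 < A" "A < 1" "A + B = 1"
  shows "angle_cos A B = 1 / 2" "angle_cos B A = 1 / 2"
proof -
  have "sin (pi * A) > 0" using assms by (intro sin_gt_zero) auto
  then show "angle_cos A B = 1 / 2" "angle_cos B A = 1 / 2"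
    unfolding angle_cos_def complementary_trig[OF assms(3)] by (simp_all add: power2_eq_square)
qed

lemma Theta_complementary:
  assumes "0 < A" "A < 1" "A + B = 1"
  shows "Theta1 (A, B) = 1" "Theta2 (A, B) = 2"
  unfolding Theta1_def Theta2_def prod.case angle_cos_complementary[OF assms] assms(3)
  by (simp_all add: arccos_one_half field_simps)

lemma angle_cos_has_derivative_right:
  assumes "0 < A" "A < 1" "A + B = 1"
  shows "((\<lambda>B. angle_cos A B) has_real_derivative 3 * pi / 4 * cot (pi * A)) (at B)"
proof -
  note trig = complementary_trig[OF assms(3)]
  have N: "((\<lambda>B. (cos (pi * (A - B) / 2))\<^sup>2 + (sin (pi * A))\<^sup>2 - (sin (pi * B))\<^sup>2)
      has_real_derivative pi * sin (pi * A) * cos (pi * A)) (at B)"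
    by (auto intro!: derivative_eq_intros simp: trig)
  have D: "((\<lambda>B. 2 * cos (pi * (A - B) / 2) * sin (pi * A))
      has_real_derivative - pi * sin (pi * A) * cos (pi * A)) (at B)"
    by (auto intro!: derivative_eq_intros simp: trig)
  have "sin (pi * A) > 0" using assms by (intro sin_gt_zero) auto
  with DERIV_divide[OF N D] show ?thesis
    unfolding angle_cos_def trig by (simp add: cot_def field_simps power2_eq_square)
qed

lemma angle_cos_has_derivative_left:
  assumes "0 < A" "A < 1" "A + B = 1"
  shows "((\<lambda>B. angle_cos B A) has_real_derivative - 3 * pi / 4 * cot (pi * A)) (at B)"
proof -
  note trig = complementary_trig[OF assms(3)]
  have N: "((\<lambda>B. (cos (pi * (B - A) / 2))\<^sup>2 + (sin (pi * B))\<^sup>2 - (sin (pi * A))\<^sup>2)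
      has_real_derivative - 3 * pi * sin (pi * A) * cos (pi * A)) (at B)"
    by (auto intro!: derivative_eq_intros simp: trig)
  have D: "((\<lambda>B. 2 * cos (pi * (B - A) / 2) * sin (pi * B))
      has_real_derivative - 3 * pi * sin (pi * A) * cos (pi * A)) (at B)"
    by (auto intro!: derivative_eq_intros simp: trig)
  have "sin (pi * A) > 0" using assms by (intro sin_gt_zero) auto
  with DERIV_divide[OF N D] show ?thesis
    unfolding angle_cos_def trig by (simp add: cot_def field_simps power2_eq_square)
qed

lemma arccos_has_derivative_half: "(arccos has_real_derivative - 2 / sqrt 3) (at (1 / 2))"
proof -
  have "(arccos has_real_derivative inverse (- sqrt (1 - (1 / 2)\<^sup>2))) (at (1 / 2))"
    by (rule DERIV_arccos) auto
  moreover have "sqrt (1 - (1 / 2)\<^sup>2) = sqrt 3 / 2"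
    by (simp add: power2_eq_square real_sqrt_divide)
  ultimately show ?thesis by simp
qed

lemma Theta_has_derivative_complementary:
  assumes "0 < A" "A < 1" "A + B = 1"
  shows "((\<lambda>B. Theta1 (A, B)) has_real_derivative 3 / 8 * (1 + sqrt 3 * cot (pi * A))) (at B)"
    and "((\<lambda>B. Theta2 (A, B)) has_real_derivative 3 / 8 * (1 + sqrt 3 * cot (pi * A))) (at B)"
proof -
  note arccos_right = arccos_has_derivative_half[folded angle_cos_complementary(1)[OF assms]]
  note arccos_left = arccos_has_derivative_half[folded angle_cos_complementary(2)[OF assms]]
  have line: "((\<lambda>B. c + pi * (A + B) / 2) has_real_derivative pi / 2) (at B)" for c
    by (auto intro!: derivative_eq_intros)
  have sqrt3: "sqrt 3 * sqrt 3 = 3" by simp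
  have "((\<lambda>B. 3 / (4 * pi) * (pi / 2 + pi * (A + B) / 2 + arccos (angle_cos B A)))
      has_real_derivative 3 / (4 * pi) * (pi / 2 + - 2 / sqrt 3 * (- 3 * pi / 4 * cot (pi * A)))) (at B)"
    by (intro DERIV_cmult DERIV_add line DERIV_chain2[OF arccos_left angle_cos_has_derivative_left[OF assms]])
  then show "((\<lambda>B. Theta1 (A, B)) has_real_derivative 3 / 8 * (1 + sqrt 3 * cot (pi * A))) (at B)"
    unfolding Theta1_def prod.case by (rule DERIV_cong) (use sqrt3 in \<open>simp add: field_simps\<close>)
  have "((\<lambda>B. 3 / (4 * pi) * (5 * pi / 2 + pi * (A + B) / 2 - arccos (angle_cos A B)))
      has_real_derivative 3 / (4 * pi) * (pi / 2 - - 2 / sqrt 3 * (3 * pi / 4 * cot (pi * A)))) (at B)"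
    by (intro DERIV_cmult DERIV_diff line DERIV_chain2[OF arccos_right angle_cos_has_derivative_right[OF assms]])
  then show "((\<lambda>B. Theta2 (A, B)) has_real_derivative 3 / 8 * (1 + sqrt 3 * cot (pi * A))) (at B)"
    unfolding Theta2_def prod.case by (rule DERIV_cong) (use sqrt3 in \<open>simp add: field_simps\<close>)
qed

lemma DERIV_imp_tendsto_backward_quotient:
  assumes "(f has_real_derivative D) (at x)"
  shows "((\<lambda>e. (f (x - e) - f x) / e) \<longlongrightarrow> - D) (at 0)"
proof -
  have "((\<lambda>e. x - e) has_real_derivative -1) (at 0)"
    by (auto intro!: derivative_eq_intros)
  moreover have "(f has_real_derivative D) (at (x - 0))"
    using assms by simp
  ultimately have "((\<lambda>e. f (x - e)) has_real_derivative D * -1) (at 0)"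
    by (rule DERIV_chain2[rotated])
  then show ?thesis
    unfolding DERIV_def by simp
qed

theorem mainTheorem5:
  fixes A0 B0 :: real
  assumes "0 < A0" "A0 < 1" "0 < B0" "B0 < 1" "A0 + B0 = 1"
  shows "\<exists>\<delta>>0. \<exists>\<Theta>1 \<Theta>2 :: real \<times> real \<Rightarrow> real.
     (\<forall>A B. \<bar>A - A0\<bar> + \<bar>B - B0\<bar> < \<delta> \<longrightarrow>
        \<Theta>1 differentiable (at (A, B)) \<and> \<Theta>2 differentiable (at (A, B)) \<and>
        Kfun (\<Theta>2 (A, B)) A + Kfun (\<Theta>1 (A, B)) B = 0 \<and>
        (A, B, \<Theta>1 (A, B), \<Theta>2 (A, B)) \<in> Kset) \<and>
     \<Theta>1 (A0, B0) = 1 \<and> \<Theta>2 (A0, B0) = 2 \<and>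
     ((\<lambda>\<epsilon>. (\<Theta>1 (A0, B0 - \<epsilon>) - 1) / \<epsilon>) \<longlongrightarrow> - 3 / 8 * (1 + sqrt 3 * cot (pi * A0))) (at 0) \<and>
     ((\<lambda>\<epsilon>. (\<Theta>2 (A0, B0 - \<epsilon>) - 2) / \<epsilon>) \<longlongrightarrow> - 3 / 8 * (1 + sqrt 3 * cot (pi * A0))) (at 0)"
proof -
  note base = assms(1,2,5)
  have "admissible A0 B0"
    using assms angle_cos_complementary[OF base] by (simp add: admissible_def)
  then obtain \<delta> where "\<delta> > 0" and near: "\<And>A B. \<bar>A - A0\<bar> + \<bar>B - B0\<bar> < \<delta> \<Longrightarrow> admissible A B"
    by (rule eventually_nhds_Pair_sum_abs[OF eventually_admissible]) blast
  have "Theta1 differentiable (at (A, B)) \<and> Theta2 differentiable (at (A, B)) \<and>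
      Kfun (Theta2 (A, B)) A + Kfun (Theta1 (A, B)) B = 0 \<and> (A, B, Theta1 (A, B), Theta2 (A, B)) \<in> Kset"
    if "\<bar>A - A0\<bar> + \<bar>B - B0\<bar> < \<delta>" for A B
    using near[OF that] Theta_differentiable Kfun_Theta_eq_0 Theta_mem_Kset
    by (simp add: admissible_def less_imp_le)
  moreover have "((\<lambda>\<epsilon>. (Theta1 (A0, B0 - \<epsilon>) - 1) / \<epsilon>) \<longlongrightarrow> - 3 / 8 * (1 + sqrt 3 * cot (pi * A0))) (at 0)"
    "((\<lambda>\<epsilon>. (Theta2 (A0, B0 - \<epsilon>) - 2) / \<epsilon>) \<longlongrightarrow> - 3 / 8 * (1 + sqrt 3 * cot (pi * A0))) (at 0)"
    using Theta_has_derivative_complementary[OF base, THEN DERIV_imp_tendsto_backward_quotient]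
    by (simp_all add: Theta_complementary[OF base])
  ultimately show ?thesis
    using \<open>\<delta> > 0\<close> Theta_complementary[OF base] by blast
qed

end
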